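(* Let $\mathbb{K}$ be any field and $n\geq 3$. Let $S$ be a linear subspace of $\mathrm{S}_n(\mathbb{K})$ in which every matrix has rank at most $2$. For $M\in S$ let $P(M)\in\mathrm{S}_{n-1}(\mathbb{K})$ be the upper-left $(n-1)\times(n-1)$ submatrix of $M$. Assume that $P(S)\subset\mathrm{WS}_{n-1,1,0}(\mathbb{K})$ and $\dim P(S)>2$. Then $S$ is congruent to a subspace of $\mathrm{WS}_{n,1,0}(\mathbb{K})$.
   Context: $\mathrm{S}_p(\mathbb{K})$ denotes the $p\times p$ symmetric matrices. $\mathrm{WS}_{p,1,0}(\mathbb{K})$ is the space of $M=(m_{i,j})\in\mathrm{S}_p(\mathbb{K})$ with $m_{i,j}=0$ whenever $i>1$ and $j>1$. Subsets $\mathcal{V},\mathcal{W}$ of $\mathrm{M}_n(\mathbb{K})$ are congruent if $\mathcal{V}=Q\mathcal{W}Q^T$ for some $Q\in\mathrm{GL}_n(\mathbb{K})$. *)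

theory Defs
  imports "Jordan_Normal_Form.DL_Rank"
begin

text \<open>Matrices are Jordan_Normal_Form matrices with explicit dimensions; indices are 0-based,
so the paper's condition "i > 1 and j > 1" becomes "i \<ge> 1 and j \<ge> 1".\<close>

definition sym_mats :: "nat \<Rightarrow> 'a::field mat set" where
  "sym_mats p = {M \<in> carrier_mat p p. transpose_mat M = M}"

definition WS_10 :: "nat \<Rightarrow> 'a::field mat set" where
  "WS_10 p = {M \<in> sym_mats p. \<forall>i j. 0 < i \<longrightarrow> 0 < j \<longrightarrow> i < p \<longrightarrow> j < p \<longrightarrow> M $$ (i, j) = 0}"

definition mat_subspace :: "nat \<Rightarrow> 'a::field mat set \<Rightarrow> bool" where
  "mat_subspace p W = subspace class_ring W (module_mat TYPE('a) p p)"

definition mat_subspace_dim :: "nat \<Rightarrow> 'a::field mat set \<Rightarrow> nat" where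
  "mat_subspace_dim p W = vectorspace.dim class_ring ((module_mat TYPE('a) p p)\<lparr>carrier := W\<rparr>)"

definition mat_rank :: "'a::field mat \<Rightarrow> nat" where
  "mat_rank A = vec_space.rank (dim_row A) A"

definition upper_left :: "nat \<Rightarrow> 'a mat \<Rightarrow> 'a mat" where
  "upper_left p M = mat (p - 1) (p - 1) (\<lambda>(i, j). M $$ (i, j))"

definition congruent_sets :: "nat \<Rightarrow> 'a::field mat set \<Rightarrow> 'a mat set \<Rightarrow> bool" where
  "congruent_sets n V W \<longleftrightarrow> (\<exists>Q \<in> carrier_mat n n. invertible_mat Q \<and>
      V = (\<lambda>M. Q * M * transpose_mat Q) ` W)"

end

theory Submission
  imports Defs "Jordan_Normal_Form.DL_Rank_Submatrix" "Jordan_Normal_Form.Gauss_Jordan_Elimination"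
    "Jordan_Normal_Form.Column_Operations"
begin

text \<open>Write a matrix of \<open>S\<close> in block form with rows and columns indexed by \<open>0\<close>, the middle
  indices \<open>I = {1, \<dots>, n - 2}\<close> and \<open>n - 1\<close>: its \<open>I \<times> I\<close> block vanishes, its first column
  restricted to \<open>I\<close> is a vector \<open>x\<close> and its last column restricted to \<open>I\<close> is a vector \<open>y\<close>.
  The vanishing \<open>3 \<times> 3\<close> minors give \<open>x\<^sub>i y\<^sub>j = x\<^sub>j y\<^sub>i\<close> and
  \<open>m\<^sub>0\<^sub>0 y\<^sub>i\<^sup>2 - 2 m\<^sub>0\<^sub>,\<^sub>n\<^sub>-\<^sub>1 x\<^sub>i y\<^sub>i + m\<^sub>n\<^sub>-\<^sub>1\<^sub>,\<^sub>n\<^sub>-\<^sub>1 x\<^sub>i\<^sup>2 = 0\<close>.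
  If the vectors \<open>x\<close> were pairwise proportional, \<open>P(S)\<close> would be spanned by two matrices;
  so two of them are independent, and additivity then forces a common ratio \<open>y = \<lambda> x\<close> on all
  of \<open>S\<close>, whence also \<open>m\<^sub>n\<^sub>-\<^sub>1\<^sub>,\<^sub>n\<^sub>-\<^sub>1 - 2 \<lambda> m\<^sub>0\<^sub>,\<^sub>n\<^sub>-\<^sub>1 + \<lambda>\<^sup>2 m\<^sub>0\<^sub>0 = 0\<close>.
  Subtracting \<open>\<lambda>\<close> times the first row and column from the last ones is then a congruence
  into \<open>WS\<^sub>n\<^sub>,\<^sub>1\<^sub>,\<^sub>0\<close>.\<close>

lemma det_dim_1:
  fixes A :: "'a::comm_ring_1 mat"
  assumes "A \<in> carrier_mat 1 1"
  shows "det A = A $$ (0,0)"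
  using assms by (subst laplace_expansion_row[of A 1 0]) (auto simp: cofactor_def det_def)

lemma det_dim_2:
  fixes A :: "'a::comm_ring_1 mat"
  assumes A: "A \<in> carrier_mat 2 2"
  shows "det A = A $$ (0,0) * A $$ (1,1) - A $$ (0,1) * A $$ (1,0)"
proof -
  have "\<And>j. mat_delete A 0 j \<in> carrier_mat 1 1" using mat_delete_carrier[OF A] by simp
  then show ?thesis
    using A by (subst laplace_expansion_row[of A 2 0])
      (auto simp: cofactor_def det_dim_1 mat_delete_def numeral_2_eq_2 lessThan_Suc)
qed

lemma det_dim_3:
  fixes A :: "'a::comm_ring_1 mat"
  assumes A: "A \<in> carrier_mat 3 3"
  shows "det A = A $$ (0,0) * (A $$ (1,1) * A $$ (2,2) - A $$ (1,2) * A $$ (2,1))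
    - A $$ (0,1) * (A $$ (1,0) * A $$ (2,2) - A $$ (1,2) * A $$ (2,0))
    + A $$ (0,2) * (A $$ (1,0) * A $$ (2,1) - A $$ (1,1) * A $$ (2,0))"
proof -
  have "\<And>j. mat_delete A 0 j \<in> carrier_mat 2 2" using mat_delete_carrier[OF A] by simp
  then show ?thesis
    using A by (subst laplace_expansion_row[of A 3 0])
      (auto simp: cofactor_def det_dim_2 mat_delete_def numeral_3_eq_3 numeral_2_eq_2
        lessThan_Suc algebra_simps)
qed

lemma pick_3:
  assumes "(a::nat) < b" "b < c"
  shows "pick {a,b,c} 0 = a" "pick {a,b,c} (Suc 0) = b" "pick {a,b,c} 2 = c"
proof -
  show p0: "pick {a,b,c} 0 = a" using assms by (auto intro!: Least_equality)
  show p1: "pick {a,b,c} (Suc 0) = b" using assms p0 by (auto intro!: Least_equality)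
  show "pick {a,b,c} 2 = c" using assms p1 by (auto simp: numeral_2_eq_2 intro!: Least_equality)
qed

lemma minor_3_eq_0_if_rank_le_2:
  fixes M :: "'a::field mat"
  assumes M: "M \<in> carrier_mat n n" and rank: "vec_space.rank n M \<le> 2"
    and r: "r0 < r1" "r1 < r2" "r2 < n" and c: "c0 < c1" "c1 < c2" "c2 < n"
  shows "M$$(r0,c0) * (M$$(r1,c1) * M$$(r2,c2) - M$$(r1,c2) * M$$(r2,c1))
    - M$$(r0,c1) * (M$$(r1,c0) * M$$(r2,c2) - M$$(r1,c2) * M$$(r2,c0))
    + M$$(r0,c2) * (M$$(r1,c0) * M$$(r2,c1) - M$$(r1,c1) * M$$(r2,c0)) = 0"
proof -
  have card: "card {i. i < n \<and> i \<in> {a,b,d}} = 3" if "a < b" "b < d" "d < n" for a b d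
  proof -
    have "{i. i < n \<and> i \<in> {a,b,d}} = {a,b,d}" using that by auto
    then show ?thesis using that by simp
  qed
  let ?A = "submatrix M {r0,r1,r2} {c0,c1,c2}"
  have dims: "dim_row M = n" "dim_col M = n" using M by auto
  have A: "?A \<in> carrier_mat 3 3"
    by (rule carrier_matI) (simp_all only: dim_submatrix dims card[OF r] card[OF c])
  have "?A $$ (i,j) = M $$ (pick {r0,r1,r2} i, pick {c0,c1,c2} j)" if "i < 3" "j < 3" for i j
    using that card[OF r] card[OF c] by (intro submatrix_index) (auto simp: dims)
  then have "det ?A = M$$(r0,c0) * (M$$(r1,c1) * M$$(r2,c2) - M$$(r1,c2) * M$$(r2,c1))
    - M$$(r0,c1) * (M$$(r1,c0) * M$$(r2,c2) - M$$(r1,c2) * M$$(r2,c0))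
    + M$$(r0,c2) * (M$$(r1,c0) * M$$(r2,c1) - M$$(r1,c1) * M$$(r2,c0))"
    unfolding det_dim_3[OF A] by (simp add: pick_3[OF r(1,2)] pick_3[OF c(1,2)] del: pick.simps)
  moreover have "det ?A = 0"
  proof (rule ccontr)
    assume "det ?A \<noteq> 0"
    from vec_space.rank_gt_minor[OF M this] card[OF c] rank show False by simp
  qed
  ultimately show ?thesis by simp
qed

lemma mat_subspace_iff:
  "mat_subspace n (W::'a::field mat set) \<longleftrightarrow> W \<subseteq> carrier_mat n n \<and> 0\<^sub>m n n \<in> W \<and>
     (\<forall>A\<in>W. \<forall>B\<in>W. A + B \<in> W) \<and> (\<forall>c. \<forall>A\<in>W. c \<cdot>\<^sub>m A \<in> W)"
  unfolding mat_subspace_def VectorSpace.subspace_def LinearCombinations.submodule_def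
  using matrix_vs[where 'a='a and nr=n and nc=n]
    vectorspace.axioms(1)[OF matrix_vs[where 'a='a and nr=n and nc=n]]
  by (auto simp: module_mat_simps class_ring_simps)

lemma (in vectorspace) subspace_dim_le_card_generators:
  assumes X: "VectorSpace.subspace K X V" and XG: "X \<subseteq> span G"
    and G: "finite G" "G \<subseteq> carrier V"
  shows "vectorspace.dim K (vs X) \<le> card G"
proof -
  have VX: "vectorspace K (vs X)" by (rule subspace_is_vs[OF X])
  have smX: "submodule K X V" using X by (simp add: VectorSpace.subspace_def)
  have smG: "submodule K (span G) V" by (rule span_is_submodule[OF G(2)])
  have VG: "vectorspace K (vs (span G))" by (rule subspace_is_vs[OF span_is_subspace[OF G(2)]])
  have GG: "G \<subseteq> span G" by (rule in_own_span[OF G(2)])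
  have gen: "LinearCombinations.module.span K (vs (span G)) G = carrier (vs (span G))"
    using span_li_not_depend(1)[OF GG smG] by simp
  have fd: "vectorspace.fin_dim K (vs (span G))"
    unfolding vectorspace.fin_dim_def[OF VG] using G(1) GG gen by auto
  have dim_G: "vectorspace.dim K (vs (span G)) \<le> card G"
    using vectorspace.gen_ge_dim[OF VG G(1)] GG gen by auto
  \<comment> \<open>independent subsets of \<open>X\<close> stay independent in \<open>span G\<close>, so they are bounded in size;
    a maximal one is then a finite basis of \<open>X\<close>\<close>
  have bound: "finite L \<and> card L \<le> card G"
    if L: "L \<subseteq> X \<and> \<not> LinearCombinations.module.lin_dep K (vs X) L" for L
  proof -
    have "\<not> lin_dep L" using L span_li_not_depend(2)[OF _ smX, of L] by auto
    moreover have LG: "L \<subseteq> span G" using L XG by auto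
    ultimately have "\<not> LinearCombinations.module.lin_dep K (vs (span G)) L"
      using span_li_not_depend(2)[OF LG smG] by auto
    from vectorspace.li_le_dim[OF VG fd _ this] LG dim_G show ?thesis by auto
  qed
  have "{} \<subseteq> X \<and> \<not> LinearCombinations.module.lin_dep K (vs X) {}"
    by (simp add: LinearCombinations.module.lin_dep_def[OF vectorspace.axioms(1)[OF VX]])
  then obtain L where L: "finite L"
    "maximal L (\<lambda>L. L \<subseteq> X \<and> \<not> LinearCombinations.module.lin_dep K (vs X) L)"
    using maximal_exists[of "\<lambda>L. L \<subseteq> X \<and> \<not> LinearCombinations.module.lin_dep K (vs X) L"]
      bound by blast
  then have "vectorspace.basis K (vs X) L" using vectorspace.max_li_is_basis[OF VX] by simp
  then have "vectorspace.dim K (vs X) = card L" using vectorspace.dim_basis[OF VX L(1)] by simp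
  also have "card L \<le> card G" using bound L(2) unfolding maximal_def by blast
  finally show ?thesis .
qed

lemma mat_subspace_dim_le_2:
  fixes X :: "'a::field mat set"
  assumes X: "mat_subspace n X" and A: "A \<in> carrier_mat n n" and B: "B \<in> carrier_mat n n"
    and span: "\<forall>M\<in>X. \<exists>a b. M = a \<cdot>\<^sub>m A + b \<cdot>\<^sub>m B"
  shows "mat_subspace_dim n X \<le> 2"
proof -
  interpret V: matrix_vs n n "TYPE('a)" .
  have AB: "{A,B} \<subseteq> carrier_mat n n" using A B by auto
  have sm: "submodule class_ring (V.span {A,B}) V.V" by (rule V.span_is_submodule) (use AB in auto)
  have "A \<in> V.span {A,B}" "B \<in> V.span {A,B}" using V.in_own_span[of "{A,B}"] AB by auto
  then have comb: "a \<cdot>\<^sub>m A + b \<cdot>\<^sub>m B \<in> V.span {A,B}" for a b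
    using sm unfolding LinearCombinations.submodule_def by (auto simp: class_ring_simps module_mat_simps)
  have "X \<subseteq> V.span {A,B}"
  proof
    fix M assume "M \<in> X"
    with span obtain a b where "M = a \<cdot>\<^sub>m A + b \<cdot>\<^sub>m B" by blast
    with comb show "M \<in> V.span {A,B}" by simp
  qed
  from V.subspace_dim_le_card_generators[OF X[unfolded mat_subspace_def] this] AB
  have "vectorspace.dim class_ring (V.vs X) \<le> card {A,B}" by auto
  also have "card {A,B} \<le> 2" by (simp add: card_insert_le_m1)
  finally show ?thesis unfolding mat_subspace_dim_def by simp
qed

lemma mat_subspace_linear_image:
  fixes S :: "'a::field mat set" and f :: "'a mat \<Rightarrow> 'a mat"
  assumes S: "mat_subspace n S"
    and carrier: "\<And>A. A \<in> carrier_mat n n \<Longrightarrow> f A \<in> carrier_mat m m"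
    and zero: "f (0\<^sub>m n n) = 0\<^sub>m m m"
    and add: "\<And>A B. A \<in> carrier_mat n n \<Longrightarrow> B \<in> carrier_mat n n \<Longrightarrow> f (A + B) = f A + f B"
    and smult: "\<And>c A. A \<in> carrier_mat n n \<Longrightarrow> f (c \<cdot>\<^sub>m A) = c \<cdot>\<^sub>m f A"
  shows "mat_subspace m (f ` S)"
proof -
  have S_carrier: "S \<subseteq> carrier_mat n n" and S_closed: "0\<^sub>m n n \<in> S"
    "\<And>A B. A \<in> S \<Longrightarrow> B \<in> S \<Longrightarrow> A + B \<in> S" "\<And>c A. A \<in> S \<Longrightarrow> c \<cdot>\<^sub>m A \<in> S"
    using S unfolding mat_subspace_iff by blast+
  have "0\<^sub>m m m \<in> f ` S" using zero S_closed(1) by (intro image_eqI[where x = "0\<^sub>m n n"]) auto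
  moreover have "X + Y \<in> f ` S" if XY: "X \<in> f ` S" "Y \<in> f ` S" for X Y
  proof -
    obtain A B where "A \<in> S" "B \<in> S" "X = f A" "Y = f B" using XY by blast
    then show ?thesis
      using S_closed(2) by (intro image_eqI[where x = "A + B"]) (auto simp: add subsetD[OF S_carrier])
  qed
  moreover have "c \<cdot>\<^sub>m X \<in> f ` S" if X: "X \<in> f ` S" for c X
  proof -
    obtain A where "A \<in> S" "X = f A" using X by blast
    then show ?thesis
      using S_closed(3) by (intro image_eqI[where x = "c \<cdot>\<^sub>m A"]) (auto simp: smult subsetD[OF S_carrier])
  qed
  moreover have "f ` S \<subseteq> carrier_mat m m" using S_carrier carrier by auto
  ultimately show ?thesis unfolding mat_subspace_iff by simp
qed

lemma mat_subspace_congruence_image: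
  fixes S :: "'a::field mat set"
  assumes S: "mat_subspace n S" and P: "P \<in> carrier_mat n n"
  shows "mat_subspace n ((\<lambda>M. P * M * transpose_mat P) ` S)"
proof (rule mat_subspace_linear_image[OF S])
  have PT: "transpose_mat P \<in> carrier_mat n n" using P by simp
  show "P * (A + B) * transpose_mat P = P * A * transpose_mat P + P * B * transpose_mat P"
    if "A \<in> carrier_mat n n" "B \<in> carrier_mat n n" for A B
    using that P PT by (simp add: mult_add_distrib_mat[of P n n] add_mult_distrib_mat[of _ n n])
  show "P * (c \<cdot>\<^sub>m A) * transpose_mat P = c \<cdot>\<^sub>m (P * A * transpose_mat P)"
    if "A \<in> carrier_mat n n" for c A
    using that P PT by (simp add: mult_smult_distrib[of P n n] mult_smult_assoc_mat[of _ n n])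
qed (use P in auto)

lemma index_upper_left [simp]:
  "i < p - 1 \<Longrightarrow> j < p - 1 \<Longrightarrow> upper_left p M $$ (i,j) = M $$ (i,j)"
  "dim_row (upper_left p M) = p - 1" "dim_col (upper_left p M) = p - 1"
  unfolding upper_left_def by simp_all

lemma mat_subspace_upper_left:
  fixes S :: "'a::field mat set"
  assumes "mat_subspace n S"
  shows "mat_subspace (n - 1) (upper_left n ` S)"
proof (rule mat_subspace_linear_image[OF assms])
  show "upper_left n (A + B) = upper_left n A + upper_left n B"
    if "A \<in> carrier_mat n n" "B \<in> carrier_mat n n" for A B :: "'a mat"
    using that by (intro eq_matI) auto
  show "upper_left n (c \<cdot>\<^sub>m A) = c \<cdot>\<^sub>m upper_left n A" if "A \<in> carrier_mat n n" for c A
    using that by (intro eq_matI) auto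
  show "upper_left n (0\<^sub>m n n) = (0\<^sub>m (n - 1) (n - 1) :: 'a mat)" by (intro eq_matI) auto
  show "upper_left n A \<in> carrier_mat (n - 1) (n - 1)" for A :: "'a mat" by (intro carrier_matI) auto
qed

lemma congruent_sets_congruence_image:
  fixes S :: "'a::field mat set"
  assumes S: "S \<subseteq> carrier_mat n n" and P: "P \<in> carrier_mat n n" and inv: "invertible_mat P"
  shows "congruent_sets n S ((\<lambda>M. P * M * transpose_mat P) ` S)"
proof -
  obtain Q where PQ: "P * Q = 1\<^sub>m n" and QP: "Q * P = 1\<^sub>m (dim_row Q)"
    using inv P unfolding invertible_mat_def inverts_mat_def by auto
  have Q: "Q \<in> carrier_mat n n"
    using arg_cong[OF PQ, of dim_col] arg_cong[OF QP, of dim_col] P by (auto intro: carrier_matI)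
  with P have QP': "Q * P = 1\<^sub>m n" using QP by simp
  have "Q * (P * M * transpose_mat P) * transpose_mat Q = M" if "M \<in> carrier_mat n n" for M
  proof -
    have "Q * (P * M * transpose_mat P) * transpose_mat Q
        = (Q * P) * M * transpose_mat (Q * P)"
      using that P Q by (simp add: transpose_mult[of Q n n P] assoc_mult_mat[of _ n n _ n _ n])
    then show ?thesis using that QP' by simp
  qed
  then have "(\<lambda>M. Q * (P * M * transpose_mat P) * transpose_mat Q) ` S = (\<lambda>M. M) ` S"
    using S by (intro image_cong) auto
  then have "S = (\<lambda>M. Q * M * transpose_mat Q) ` (\<lambda>M. P * M * transpose_mat P) ` S"
    by (simp add: image_image)
  moreover have "invertible_mat Q"
    using P Q PQ QP' unfolding invertible_mat_def inverts_mat_def by auto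
  ultimately show ?thesis unfolding congruent_sets_def using Q by blast
qed

lemma congruence_sym_mats:
  fixes M :: "'a::field mat"
  assumes M: "M \<in> sym_mats n" and P: "P \<in> carrier_mat n n"
  shows "P * M * transpose_mat P \<in> sym_mats n"
proof -
  have Mc: "M \<in> carrier_mat n n" and MT: "transpose_mat M = M" using M unfolding sym_mats_def by auto
  have "transpose_mat (P * M * transpose_mat P) = P * transpose_mat M * transpose_mat P"
    using Mc P by (simp add: transpose_mult[of _ n n _ n] assoc_mult_mat[of _ n n _ n _ n])
  then show ?thesis using MT Mc P unfolding sym_mats_def by simp
qed

lemma invertible_addrow_mat:
  fixes a :: "'a::comm_ring_1"
  assumes "k < n" "l < n" "k \<noteq> l"
  shows "invertible_mat (addrow_mat n a k l)"
  using addrow_mat_inv[OF assms, of a] addrow_mat_inv[OF assms, of "- a"]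
  unfolding invertible_mat_def inverts_mat_def
  by (intro conjI exI[of _ "addrow_mat n (- a) k l"]) (auto simp: square_mat.simps)

lemma addrow_congruence:
  fixes M :: "'a::comm_ring_1 mat"
  assumes M: "M \<in> carrier_mat n n" and l: "l < n"
  shows "addrow_mat n a k l * M * transpose_mat (addrow_mat n a k l) = addcol a k l (addrow a k l M)"
proof -
  have "transpose_mat (addrow_mat n a k l) = addrow_mat n a l k" by (rule eq_matI) auto
  then show ?thesis
    using M l by (simp add: addrow_mat[symmetric, OF M l] addcol_mat[of _ n n])
qed

definition indep_pair_on :: "'i set \<Rightarrow> ('i \<Rightarrow> 'a::field) \<Rightarrow> ('i \<Rightarrow> 'a) \<Rightarrow> bool" where
  "indep_pair_on I f g \<longleftrightarrow> (\<forall>\<alpha> \<beta>. (\<forall>i\<in>I. \<alpha> * f i + \<beta> * g i = 0) \<longrightarrow> \<alpha> = 0 \<and> \<beta> = 0)"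

lemma indep_pair_on_commute: "indep_pair_on I f g \<longleftrightarrow> indep_pair_on I g f"
  unfolding indep_pair_on_def by (metis add.commute)

lemma indep_pair_on_nonzero:
  assumes "indep_pair_on I f g"
  shows "\<exists>k\<in>I. f k \<noteq> 0"
  using assms unfolding indep_pair_on_def by (metis add.right_neutral mult_1 mult_zero_left one_neq_zero)

lemma indep_pair_on_sum_nonzero:
  assumes "indep_pair_on I f g"
  shows "\<exists>k\<in>I. f k + g k \<noteq> 0"
  using assms unfolding indep_pair_on_def by (metis mult_1 one_neq_zero)

lemma not_indep_pair_on_multiple:
  assumes "\<not> indep_pair_on I f g" and "k \<in> I" "g k \<noteq> 0"
  shows "\<exists>c. \<forall>i\<in>I. f i = c * g i"
proof -
  obtain \<alpha> \<beta> where comb: "\<forall>i\<in>I. \<alpha> * f i + \<beta> * g i = 0" and nontrivial: "\<alpha> \<noteq> 0 \<or> \<beta> \<noteq> 0"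
    using assms(1) unfolding indep_pair_on_def by blast
  have "\<alpha> \<noteq> 0" using comb nontrivial assms(2,3) by force
  then have "\<forall>i\<in>I. f i = - \<beta> / \<alpha> * g i"
    using comb by (simp add: field_simps eq_neg_iff_add_eq_0)
  then show ?thesis by blast
qed

lemma indep_pair_on_either:
  assumes indep: "indep_pair_on I f g" and h: "k \<in> I" "h k \<noteq> 0"
  shows "indep_pair_on I h f \<or> indep_pair_on I h g"
proof (rule ccontr)
  assume "\<not> ?thesis"
  moreover obtain kf kg where "kf \<in> I" "f kf \<noteq> 0" "kg \<in> I" "g kg \<noteq> 0"
    using indep_pair_on_nonzero indep indep_pair_on_commute by metis
  ultimately obtain c d where c: "\<forall>i\<in>I. h i = c * f i" and d: "\<forall>i\<in>I. h i = d * g i"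
    using not_indep_pair_on_multiple by metis
  then have "\<forall>i\<in>I. c * f i + (- d) * g i = 0" by force
  then have "c = 0" using indep unfolding indep_pair_on_def by blast
  then show False using c h by simp
qed

lemma pairwise_dependent_multiples:
  assumes "\<forall>u\<in>V. \<forall>v\<in>V. \<not> indep_pair_on I (x u) (x v)"
  shows "\<exists>w. \<forall>u\<in>V. \<exists>c. \<forall>i\<in>I. x u i = c * w i"
proof (cases "\<exists>v\<in>V. \<exists>k\<in>I. x v k \<noteq> 0")
  case True
  then obtain v k where "v \<in> V" "k \<in> I" "x v k \<noteq> 0" by blast
  then show ?thesis using assms not_indep_pair_on_multiple by metis
next
  case False
  then show ?thesis by (intro exI[of _ "\<lambda>_. 0"]) auto
qed

text \<open>Read \<open>x u\<close> and \<open>y u\<close> as the two rows of an \<open>2 \<times> I\<close> matrix; \<open>minor\<close> says that it has rank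
  at most one.\<close>

locale rank_one_pencil =
  fixes V :: "'v::plus set" and I :: "'i set" and x y :: "'v \<Rightarrow> 'i \<Rightarrow> 'a::field"
  assumes add_closed: "u \<in> V \<Longrightarrow> v \<in> V \<Longrightarrow> u + v \<in> V"
    and x_add: "u \<in> V \<Longrightarrow> v \<in> V \<Longrightarrow> i \<in> I \<Longrightarrow> x (u + v) i = x u i + x v i"
    and y_add: "u \<in> V \<Longrightarrow> v \<in> V \<Longrightarrow> i \<in> I \<Longrightarrow> y (u + v) i = y u i + y v i"
    and minor: "u \<in> V \<Longrightarrow> i \<in> I \<Longrightarrow> j \<in> I \<Longrightarrow> x u i * y u j = x u j * y u i"
begin

lemma ratio_of_nonzero:
  assumes "u \<in> V" "k \<in> I" "x u k \<noteq> 0"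
  shows "\<forall>i\<in>I. y u i = y u k / x u k * x u i"
  using assms minor[of u k] by (simp add: field_simps)

lemma ratio_unique:
  assumes uv: "u \<in> V" "v \<in> V" and indep: "indep_pair_on I (x u) (x v)"
    and \<mu>: "\<forall>i\<in>I. y u i = \<mu> * x u i" and \<nu>: "\<forall>i\<in>I. y v i = \<nu> * x v i"
  shows "\<mu> = \<nu>"
proof -
  obtain k where k: "k \<in> I" "x (u + v) k \<noteq> 0"
    using indep_pair_on_sum_nonzero[OF indep] x_add[OF uv] by metis
  define \<rho> where "\<rho> = y (u + v) k / x (u + v) k"
  have "\<forall>i\<in>I. y (u + v) i = \<rho> * x (u + v) i"
    unfolding \<rho>_def using ratio_of_nonzero[OF add_closed[OF uv] k] .
  then have "\<forall>i\<in>I. (\<mu> - \<rho>) * x u i + (\<nu> - \<rho>) * x v i = 0"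
    using \<mu> \<nu> x_add[OF uv] y_add[OF uv] by (simp add: algebra_simps)
  then have "\<mu> - \<rho> = 0 \<and> \<nu> - \<rho> = 0" using indep unfolding indep_pair_on_def by blast
  then show ?thesis by simp
qed

text \<open>If \<open>x u\<close> vanishes on \<open>I\<close>, compare \<open>u + v\<^sub>0\<close> with \<open>v\<^sub>0\<close>.\<close>

lemma additive_vanishing_extends:
  fixes g :: "'v \<Rightarrow> 'b::monoid_add"
  assumes g_add: "\<And>u v. u \<in> V \<Longrightarrow> v \<in> V \<Longrightarrow> g (u + v) = g u + g v"
    and vanish: "\<And>u k. u \<in> V \<Longrightarrow> k \<in> I \<Longrightarrow> x u k \<noteq> 0 \<Longrightarrow> g u = 0"
    and v0: "v0 \<in> V" "k0 \<in> I" "x v0 k0 \<noteq> 0" and u: "u \<in> V"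
  shows "g u = 0"
proof (cases "\<exists>k\<in>I. x u k \<noteq> 0")
  case True
  then show ?thesis using vanish u by blast
next
  case False
  then have "x (u + v0) k0 \<noteq> 0" using x_add[OF u v0(1) v0(2)] v0 by simp
  then have "g (u + v0) = 0" using vanish add_closed[OF u v0(1)] v0(2) by blast
  then show ?thesis using g_add[OF u v0(1)] vanish[OF v0] by simp
qed

theorem common_ratio:
  assumes uv: "u \<in> V" "v \<in> V" and indep: "indep_pair_on I (x u) (x v)"
  shows "\<exists>c. \<forall>w\<in>V. \<forall>i\<in>I. y w i = c * x w i"
proof -
  obtain ku kv where ku: "ku \<in> I" "x u ku \<noteq> 0" and kv: "kv \<in> I" "x v kv \<noteq> 0"
    using indep_pair_on_nonzero indep indep_pair_on_commute by metis
  define c where "c = y u ku / x u ku"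
  have ratio_u: "\<forall>i\<in>I. y u i = c * x u i" unfolding c_def using ratio_of_nonzero[OF uv(1) ku] .
  have ratio_v: "\<forall>i\<in>I. y v i = c * x v i"
    using ratio_unique[OF uv indep ratio_u ratio_of_nonzero[OF uv(2) kv]] ratio_of_nonzero[OF uv(2) kv]
    by simp
  have nonzero_case: "y w i - c * x w i = 0" if w: "w \<in> V" "k \<in> I" "x w k \<noteq> 0" "i \<in> I" for w k i
  proof -
    have ratio_w: "\<forall>i\<in>I. y w i = y w k / x w k * x w i" using ratio_of_nonzero[OF w(1-3)] .
    from indep_pair_on_either[where h = "x w", OF indep w(2,3)] have "y w k / x w k = c"
      using ratio_unique[OF w(1) uv(1) _ ratio_w ratio_u] ratio_unique[OF w(1) uv(2) _ ratio_w ratio_v]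
      by blast
    then show ?thesis using ratio_w w(4) by simp
  qed
  have "y w i - c * x w i = 0" if "w \<in> V" "i \<in> I" for w i
    using additive_vanishing_extends[where g = "\<lambda>w. y w i - c * x w i", OF _ _ uv(1) ku that(1)]
      nonzero_case that(2) x_add y_add by (simp add: algebra_simps)
  then show ?thesis by auto
qed

end

lemma sym_mats_index:
  assumes "M \<in> sym_mats n" "i < n" "j < n"
  shows "M $$ (j,i) = M $$ (i,j)"
proof -
  have M: "M \<in> carrier_mat n n" and MT: "transpose_mat M = M"
    using assms(1) unfolding sym_mats_def by auto
  have "M $$ (j,i) = transpose_mat M $$ (i,j)" using M assms(2,3) by simp
  then show ?thesis unfolding MT .
qed

context
  fixes M :: "'a::field mat" and n :: nat
  assumes sym: "M \<in> sym_mats n" and rank: "mat_rank M \<le> 2"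
    and middle: "\<And>i j. i \<in> {0<..<n - 1} \<Longrightarrow> j \<in> {0<..<n - 1} \<Longrightarrow> M $$ (i,j) = 0"
begin

lemma bordered_minor_cross:
  assumes i: "i \<in> {0<..<n - 1}" and j: "j \<in> {0<..<n - 1}"
  shows "M$$(i,0) * M$$(j,n-1) = M$$(j,0) * M$$(i,n-1)"
proof -
  have M: "M \<in> carrier_mat n n" using sym unfolding sym_mats_def by simp
  have rank': "vec_space.rank n M \<le> 2" using rank M unfolding mat_rank_def by simp
  have lt: "M$$(i,0) * M$$(j,n-1) = M$$(j,0) * M$$(i,n-1)"
    if ij: "i \<in> {0<..<n - 1}" "j \<in> {0<..<n - 1}" "i < j" for i j
  proof -
    define D where "D = M$$(i,0) * M$$(j,n-1) - M$$(j,0) * M$$(i,n-1)"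
    have zero: "M$$(i,i) = 0" "M$$(j,i) = 0" using middle ij by auto
    have entries: "M$$(0,i) = M$$(i,0)" "M$$(n-1,i) = M$$(i,n-1)" "M$$(n-1,0) = M$$(0,n-1)"
      using sym_mats_index[OF sym, of i 0] sym_mats_index[OF sym, of i "n-1"]
        sym_mats_index[OF sym, of 0 "n-1"] ij by auto
    have "M$$(0,0) * (M$$(i,i) * M$$(j,n-1) - M$$(i,n-1) * M$$(j,i))
      - M$$(0,i) * (M$$(i,0) * M$$(j,n-1) - M$$(i,n-1) * M$$(j,0))
      + M$$(0,n-1) * (M$$(i,0) * M$$(j,i) - M$$(i,i) * M$$(j,0)) = 0" (is "?minor = 0")
      using ij by (intro minor_3_eq_0_if_rank_le_2[OF M rank']) auto
    moreover have "M$$(i,0) * D = - ?minor"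
      unfolding zero entries D_def by (simp add: algebra_simps)
    ultimately have xD: "M$$(i,0) * D = 0" by simp
    have "M$$(i,0) * (M$$(j,i) * M$$(n-1,n-1) - M$$(j,n-1) * M$$(n-1,i))
      - M$$(i,i) * (M$$(j,0) * M$$(n-1,n-1) - M$$(j,n-1) * M$$(n-1,0))
      + M$$(i,n-1) * (M$$(j,0) * M$$(n-1,i) - M$$(j,i) * M$$(n-1,0)) = 0" (is "?minor = 0")
      using ij by (intro minor_3_eq_0_if_rank_le_2[OF M rank']) auto
    moreover have "M$$(i,n-1) * D = - ?minor"
      unfolding zero entries D_def by (simp add: algebra_simps)
    ultimately have yD: "M$$(i,n-1) * D = 0" by simp
    have "D * D = (M$$(i,0) * M$$(j,n-1) - M$$(j,0) * M$$(i,n-1)) * D"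
      by (subst (1) D_def) (rule refl)
    also have "\<dots> = M$$(j,n-1) * (M$$(i,0) * D) - M$$(j,0) * (M$$(i,n-1) * D)"
      by (simp add: algebra_simps)
    also have "\<dots> = 0" unfolding xD yD by simp
    finally show ?thesis unfolding D_def by simp
  qed
  show ?thesis
    using lt[OF i j] lt[OF j i] by (cases i j rule: linorder_cases) (auto simp: mult.commute)
qed

lemma bordered_minor_border:
  assumes i: "i \<in> {0<..<n - 1}"
  shows "M$$(0,0) * M$$(i,n-1)^2 - 2 * M$$(0,n-1) * M$$(i,0) * M$$(i,n-1)
    + M$$(n-1,n-1) * M$$(i,0)^2 = 0"
proof -
  have M: "M \<in> carrier_mat n n" using sym unfolding sym_mats_def by simp
  have rank': "vec_space.rank n M \<le> 2" using rank M unfolding mat_rank_def by simp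
  have "M$$(0,0) * (M$$(i,i) * M$$(n-1,n-1) - M$$(i,n-1) * M$$(n-1,i))
    - M$$(0,i) * (M$$(i,0) * M$$(n-1,n-1) - M$$(i,n-1) * M$$(n-1,0))
    + M$$(0,n-1) * (M$$(i,0) * M$$(n-1,i) - M$$(i,i) * M$$(n-1,0)) = 0" (is "?minor = 0")
    using i by (intro minor_3_eq_0_if_rank_le_2[OF M rank']) auto
  moreover have "M$$(i,i) = 0" "M$$(0,i) = M$$(i,0)" "M$$(n-1,i) = M$$(i,n-1)"
    "M$$(n-1,0) = M$$(0,n-1)"
    using middle[OF i i] sym_mats_index[OF sym, of i 0] sym_mats_index[OF sym, of i "n-1"]
      sym_mats_index[OF sym, of 0 "n-1"] i by auto
  then have "M$$(0,0) * M$$(i,n-1)^2 - 2 * M$$(0,n-1) * M$$(i,0) * M$$(i,n-1)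
    + M$$(n-1,n-1) * M$$(i,0)^2 = - ?minor"
    by (simp add: algebra_simps power2_eq_square)
  ultimately show ?thesis by simp
qed

end

lemma addrow_congruence_WS_10:
  fixes M :: "'a::field mat"
  assumes sym: "M \<in> sym_mats n" and n: "2 \<le> n"
    and middle: "\<And>i j. i \<in> {0<..<n - 1} \<Longrightarrow> j \<in> {0<..<n - 1} \<Longrightarrow> M $$ (i,j) = 0"
    and ratio: "\<forall>i\<in>{0<..<n - 1}. M$$(i,n-1) = c * M$$(i,0)"
    and border: "M$$(n-1,n-1) - 2 * c * M$$(0,n-1) + c^2 * M$$(0,0) = 0"
  shows "addrow_mat n (-c) (n-1) 0 * M * transpose_mat (addrow_mat n (-c) (n-1) 0) \<in> WS_10 n"
proof -
  let ?P = "addrow_mat n (-c) (n-1) 0"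
  have M: "M \<in> carrier_mat n n" using sym unfolding sym_mats_def by simp
  have row_col_ops: "?P * M * transpose_mat ?P = addcol (-c) (n-1) 0 (addrow (-c) (n-1) 0 M)"
    using addrow_congruence[OF M] n by simp
  have "(?P * M * transpose_mat ?P) $$ (i,j) = 0" if ij: "0 < i" "0 < j" "i < n" "j < n" for i j
  proof (cases "i = n - 1"; cases "j = n - 1")
    assume "i = n - 1" "j = n - 1"
    moreover have "M$$(n-1,0) = M$$(0,n-1)" using sym_mats_index[OF sym, of 0 "n-1"] n by simp
    ultimately show ?thesis
      using M ij border unfolding row_col_ops by (simp add: algebra_simps power2_eq_square)
  next
    assume "i = n - 1" "j \<noteq> n - 1"
    moreover have "M$$(0,j) = M$$(j,0)" "M$$(n-1,j) = M$$(j,n-1)"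
      using sym_mats_index[OF sym, of j 0] sym_mats_index[OF sym, of j "n-1"] ij by auto
    ultimately show ?thesis using M ij ratio unfolding row_col_ops by simp
  next
    assume "i \<noteq> n - 1" "j = n - 1"
    then show ?thesis using M ij ratio unfolding row_col_ops by simp
  next
    assume "i \<noteq> n - 1" "j \<noteq> n - 1"
    then show ?thesis using M ij middle unfolding row_col_ops by simp
  qed
  then show ?thesis
    using congruence_sym_mats[OF sym addrow_mat_carrier] unfolding WS_10_def by simp
qed

locale bordered_rank_2_space =
  fixes S :: "'a::field mat set" and n :: nat
  assumes n: "3 \<le> n" and subspace: "mat_subspace n S" and sym: "S \<subseteq> sym_mats n"
    and rank: "\<forall>M\<in>S. mat_rank M \<le> 2" and upper_left_WS_10: "upper_left n ` S \<subseteq> WS_10 (n - 1)"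
begin

lemma mem_carrier: "M \<in> S \<Longrightarrow> M \<in> carrier_mat n n"
  using sym unfolding sym_mats_def by auto

lemma middle_zero:
  assumes "M \<in> S" "i \<in> {0<..<n - 1}" "j \<in> {0<..<n - 1}"
  shows "M $$ (i,j) = 0"
proof -
  have "upper_left n M $$ (i,j) = 0"
    using upper_left_WS_10 assms unfolding WS_10_def by auto
  then show ?thesis using assms(2,3) by simp
qed

sublocale rank_one_pencil S "{0<..<n - 1}" "\<lambda>M i. M $$ (i,0)" "\<lambda>M i. M $$ (i,n-1)"
proof
  show "u + v \<in> S" if "u \<in> S" "v \<in> S" for u v
    using subspace that unfolding mat_subspace_iff by blast
  show "(u + v) $$ (i,0) = u $$ (i,0) + v $$ (i,0)" "(u + v) $$ (i,n-1) = u $$ (i,n-1) + v $$ (i,n-1)"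
    if "u \<in> S" "v \<in> S" "i \<in> {0<..<n - 1}" for u v i
    using that mem_carrier[of v] by auto
  show "u $$ (i,0) * u $$ (j,n-1) = u $$ (j,0) * u $$ (i,n-1)"
    if "u \<in> S" "i \<in> {0<..<n - 1}" "j \<in> {0<..<n - 1}" for u i j
    using bordered_minor_cross[of u n] that sym rank middle_zero by blast
qed

lemma border_form_vanishes:
  assumes ratio: "\<forall>M\<in>S. \<forall>i\<in>{0<..<n - 1}. M$$(i,n-1) = c * M$$(i,0)"
    and M0: "M0 \<in> S" "k0 \<in> {0<..<n - 1}" "M0$$(k0,0) \<noteq> 0" and M: "M \<in> S"
  shows "M$$(n-1,n-1) - 2 * c * M$$(0,n-1) + c^2 * M$$(0,0) = 0"
proof (rule additive_vanishing_extends[OF _ _ M0 M])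
  show "(u + v)$$(n-1,n-1) - 2 * c * (u + v)$$(0,n-1) + c^2 * (u + v)$$(0,0)
    = (u$$(n-1,n-1) - 2 * c * u$$(0,n-1) + c^2 * u$$(0,0))
      + (v$$(n-1,n-1) - 2 * c * v$$(0,n-1) + c^2 * v$$(0,0))"
    if "u \<in> S" "v \<in> S" for u v
    using that mem_carrier[of u] mem_carrier[of v] n by (simp add: algebra_simps)
  show "u$$(n-1,n-1) - 2 * c * u$$(0,n-1) + c^2 * u$$(0,0) = 0"
    if u: "u \<in> S" "k \<in> {0<..<n - 1}" "u$$(k,0) \<noteq> 0" for u k
  proof -
    have "u$$(k,0)^2 * (u$$(n-1,n-1) - 2 * c * u$$(0,n-1) + c^2 * u$$(0,0))
      = u$$(0,0) * u$$(k,n-1)^2 - 2 * u$$(0,n-1) * u$$(k,0) * u$$(k,n-1)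
        + u$$(n-1,n-1) * u$$(k,0)^2"
      using ratio u by (simp add: algebra_simps power2_eq_square)
    also have "\<dots> = 0"
      using bordered_minor_border[of u n] u sym rank middle_zero by blast
    finally show ?thesis using u(3) by simp
  qed
qed

lemma upper_left_dim_le_2:
  assumes "\<forall>M\<in>S. \<forall>N\<in>S. \<not> indep_pair_on {0<..<n - 1} (\<lambda>i. M$$(i,0)) (\<lambda>i. N$$(i,0))"
  shows "mat_subspace_dim (n - 1) (upper_left n ` S) \<le> 2"
proof -
  obtain v where v: "\<forall>M\<in>S. \<exists>a. \<forall>i\<in>{0<..<n - 1}. M$$(i,0) = a * v i"
    using pairwise_dependent_multiples[OF assms] by blast
  define E :: "'a mat" where "E = mat (n-1) (n-1) (\<lambda>(i,j). if i = 0 \<and> j = 0 then 1 else 0)"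
  define V :: "'a mat" where
    "V = mat (n-1) (n-1) (\<lambda>(i,j). if i = 0 \<and> 0 < j then v j else if j = 0 \<and> 0 < i then v i else 0)"
  have "\<exists>a b. X = a \<cdot>\<^sub>m E + b \<cdot>\<^sub>m V" if X_in: "X \<in> upper_left n ` S" for X
  proof -
    obtain M where M: "M \<in> S" and X: "X = upper_left n M" using X_in by blast
    obtain a where a: "\<forall>i\<in>{0<..<n - 1}. M$$(i,0) = a * v i" using v M by blast
    have "X = M$$(0,0) \<cdot>\<^sub>m E + a \<cdot>\<^sub>m V"
    proof (rule eq_matI)
      fix i j assume "i < dim_row (M$$(0,0) \<cdot>\<^sub>m E + a \<cdot>\<^sub>m V)" "j < dim_col (M$$(0,0) \<cdot>\<^sub>m E + a \<cdot>\<^sub>m V)"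
      then have ij: "i < n - 1" "j < n - 1" by (auto simp: E_def V_def)
      have "M $$ (0,j) = M $$ (j,0)" using sym_mats_index[of M n j 0] M sym ij by auto
      then show "X $$ (i,j) = (M$$(0,0) \<cdot>\<^sub>m E + a \<cdot>\<^sub>m V) $$ (i,j)"
        using ij a middle_zero[OF M, of i j] unfolding X by (auto simp: E_def V_def)
    qed (auto simp: X E_def V_def)
    then show ?thesis by blast
  qed
  moreover have "E \<in> carrier_mat (n - 1) (n - 1)" "V \<in> carrier_mat (n - 1) (n - 1)"
    unfolding E_def V_def by simp_all
  ultimately show ?thesis
    using mat_subspace_dim_le_2[OF mat_subspace_upper_left[OF subspace]] by blast
qed

end

theorem lemma4p7:
  fixes S :: "'a::field mat set" and n :: nat
  assumes "n \<ge> 3"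
    and "mat_subspace n S"
    and "S \<subseteq> sym_mats n"
    and "\<forall>M \<in> S. mat_rank M \<le> 2"
    and "upper_left n ` S \<subseteq> WS_10 (n - 1)"
    and "mat_subspace_dim (n - 1) (upper_left n ` S) > 2"
  shows "\<exists>W. mat_subspace n W \<and> W \<subseteq> WS_10 n \<and> congruent_sets n S W"
proof -
  interpret bordered_rank_2_space S n using assms(1-5) by unfold_locales
  obtain M1 M2 where M12: "M1 \<in> S" "M2 \<in> S"
    and indep: "indep_pair_on {0<..<n - 1} (\<lambda>i. M1$$(i,0)) (\<lambda>i. M2$$(i,0))"
    using upper_left_dim_le_2 assms(6) by fastforce
  obtain c where ratio: "\<forall>M\<in>S. \<forall>i\<in>{0<..<n - 1}. M$$(i,n-1) = c * M$$(i,0)"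
    using common_ratio[OF M12 indep] by blast
  obtain k where k: "k \<in> {0<..<n - 1}" "M1$$(k,0) \<noteq> 0"
    using indep_pair_on_nonzero[OF indep] by blast
  define P where "P = addrow_mat n (-c) (n-1) 0"
  have P: "P \<in> carrier_mat n n" "invertible_mat P"
    using n unfolding P_def by (auto intro: invertible_addrow_mat)
  have "P * M * transpose_mat P \<in> WS_10 n" if "M \<in> S" for M
    unfolding P_def
  proof (rule addrow_congruence_WS_10)
    show "M$$(n-1,n-1) - 2 * c * M$$(0,n-1) + c^2 * M$$(0,0) = 0"
      using border_form_vanishes[OF ratio M12(1) k that] .
  qed (use that sym n middle_zero ratio in auto)
  then have "(\<lambda>M. P * M * transpose_mat P) ` S \<subseteq> WS_10 n" by blast
  moreover have "mat_subspace n ((\<lambda>M. P * M * transpose_mat P) ` S)"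
    using mat_subspace_congruence_image[OF subspace P(1)] .
  moreover have "congruent_sets n S ((\<lambda>M. P * M * transpose_mat P) ` S)"
    using congruent_sets_congruence_image[OF _ P] mem_carrier by blast
  ultimately show ?thesis by blast
qed

end
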